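(* Let $1,2,3,4$ be four distinct vertices of $G$ such that $G[\{1,2,3\}]$ has edge set exactly $\{12,23\}$ and $G[\{2,3,4\}]$ has edge set exactly $\{23,34\}$ (nothing is assumed about whether $14$ is an edge). If $\Gamma_G$ is population monotonic, then $w_{23}\ge w_{12}+w_{34}$.
   Context: $G=(V,E;w)$ is a finite simple graph with edge weights $w:E\to\mathbb{R}$, $w_e>0$ for all $e\in E$; $w_{ij}$ denotes the weight of edge $ij$. The matching game on $G$ is the cooperative game $\Gamma_G=(N,\gamma)$ with player set $N=V$ and, for $S\subseteq N$, $\gamma(S)$ equal to the maximum weight of a matching in the induced subgraph $G[S]$ (so $\gamma(\emptyset)=0$). A population monotonic allocation scheme (PMAS) is a family $(\boldsymbol{x}_S)_{\emptyset\neq S\subseteq N}$ with $\boldsymbol{x}_S=(x_{S,i})_{i\in S}\in\mathbb{R}^S$ such that (efficiency) $\sum_{i\in S}x_{S,i}=\gamma(S)$ for every nonempty $S\subseteq N$, and (monotonicity) $x_{S,i}\le x_{T,i}$ whenever $\emptyset\ne S\subseteq T\subseteq N$ and $i\in S$. $\Gamma_G$ is called population monotonic if it admits a PMAS. *)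

theory Defs
  imports Complex_Main
begin

definition weighted_simple_graph :: "'a set \<Rightarrow> 'a set set \<Rightarrow> ('a set \<Rightarrow> real) \<Rightarrow> bool" where
  "weighted_simple_graph V E w \<longleftrightarrow> finite V \<and> (\<forall>e\<in>E. e \<subseteq> V \<and> card e = 2) \<and> (\<forall>e\<in>E. w e > 0)"

definition induced_edges :: "'a set set \<Rightarrow> 'a set \<Rightarrow> 'a set set" where
  "induced_edges E S = {e\<in>E. e \<subseteq> S}"

definition matching_in :: "'a set set \<Rightarrow> 'a set \<Rightarrow> 'a set set \<Rightarrow> bool" where
  "matching_in E S M \<longleftrightarrow> M \<subseteq> induced_edges E S \<and> (\<forall>e\<in>M. \<forall>f\<in>M. e \<noteq> f \<longrightarrow> e \<inter> f = {})"

definition match_value :: "'a set set \<Rightarrow> ('a set \<Rightarrow> real) \<Rightarrow> 'a set \<Rightarrow> real" where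
  "match_value E w S = Max {sum w M | M. matching_in E S M}"

definition is_PMAS :: "'a set \<Rightarrow> 'a set set \<Rightarrow> ('a set \<Rightarrow> real) \<Rightarrow> ('a set \<Rightarrow> 'a \<Rightarrow> real) \<Rightarrow> bool" where
  "is_PMAS V E w x \<longleftrightarrow>
     (\<forall>S. S \<subseteq> V \<and> S \<noteq> {} \<longrightarrow> (\<Sum>i\<in>S. x S i) = match_value E w S) \<and>
     (\<forall>S T i. S \<noteq> {} \<and> S \<subseteq> T \<and> T \<subseteq> V \<and> i \<in> S \<longrightarrow> x S i \<le> x T i)"

definition population_monotonic :: "'a set \<Rightarrow> 'a set set \<Rightarrow> ('a set \<Rightarrow> real) \<Rightarrow> bool" where
  "population_monotonic V E w \<longleftrightarrow> (\<exists>x. is_PMAS V E w x)"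

end

theory Submission
  imports Defs
begin

text \<open>Write \<open>a, b, c\<close> for the weights of the edges 12, 23, 34. Monotonicity of a PMAS
  gives \<open>\<gamma>(12) + x\<^sub>2\<^sub>3(3) \<le> \<gamma>(123)\<close> and \<open>\<gamma>(34) + x\<^sub>2\<^sub>3(2) \<le> \<gamma>(234)\<close>; adding them and using
  efficiency on \<open>{2,3}\<close> yields \<open>a + b + c \<le> \<gamma>(123) + \<gamma>(234) = max a b + max b c\<close>, since the
  induced subgraphs on 123 and 234 are paths with two edges. For positive weights this
  forces \<open>a + c \<le> b\<close>.\<close>

lemma finite_edges_if_weighted_simple_graph:
  assumes "weighted_simple_graph V E w"
  shows "finite E"
proof -
  have "E \<subseteq> Pow V" using assms by (auto simp: weighted_simple_graph_def)
  then show ?thesis using assms finite_subset by (auto simp: weighted_simple_graph_def)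
qed

lemma finite_matching_weights:
  assumes "finite E"
  shows "finite {sum w M | M. matching_in E S M}"
proof -
  have "{sum w M | M. matching_in E S M} \<subseteq> sum w ` Pow E"
    by (auto simp: matching_in_def induced_edges_def)
  then show ?thesis using assms finite_subset by blast
qed

lemma match_value_ge:
  assumes "finite E" "matching_in E S M"
  shows "sum w M \<le> match_value E w S"
  unfolding match_value_def using assms finite_matching_weights[OF assms(1)]
  by (intro Max_ge) auto

lemma match_value_le:
  assumes "finite E" "\<And>M. matching_in E S M \<Longrightarrow> sum w M \<le> B"
  shows "match_value E w S \<le> B"
proof -
  have "matching_in E S {}" by (simp add: matching_in_def)
  then show ?thesis unfolding match_value_def using assms finite_matching_weights[OF assms(1)]
    by (subst Max_le_iff) auto
qed

lemma match_value_ge_edge: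
  assumes "finite E" "e \<in> E" "e \<subseteq> S"
  shows "w e \<le> match_value E w S"
proof -
  have "matching_in E S {e}" using assms by (auto simp: matching_in_def induced_edges_def)
  from match_value_ge[OF assms(1) this] show ?thesis by simp
qed

text \<open>Two intersecting edges cannot both lie in a matching.\<close>

lemma match_value_two_edge_path:
  fixes w :: "'a set \<Rightarrow> real"
  assumes "finite E" "induced_edges E S = {A, B}" "A \<noteq> B" "A \<inter> B \<noteq> {}"
    "w A \<ge> 0" "w B \<ge> 0"
  shows "match_value E w S \<le> max (w A) (w B)"
proof (rule match_value_le[OF assms(1)])
  fix M assume M: "matching_in E S M"
  have "M \<subseteq> {A, B}" using assms(2) M by (simp add: matching_in_def)
  moreover have "\<not> (A \<in> M \<and> B \<in> M)" using assms(3,4) M by (auto simp: matching_in_def)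
  ultimately have "M = {} \<or> M = {A} \<or> M = {B}" by blast
  then show "sum w M \<le> max (w A) (w B)" using assms(5,6) by auto
qed

lemma PMAS_path_inequality:
  assumes x: "is_PMAS V E w x"
    and verts: "u1 \<in> V" "u2 \<in> V" "u3 \<in> V" "u4 \<in> V"
    and dist: "distinct [u1, u2, u3, u4]"
  shows "match_value E w {u1, u2} + match_value E w {u2, u3} + match_value E w {u3, u4}
    \<le> match_value E w {u1, u2, u3} + match_value E w {u2, u3, u4}"
proof -
  have eff: "\<And>S. S \<subseteq> V \<Longrightarrow> S \<noteq> {} \<Longrightarrow> (\<Sum>i\<in>S. x S i) = match_value E w S"
    and mon: "\<And>S T i. S \<noteq> {} \<Longrightarrow> S \<subseteq> T \<Longrightarrow> T \<subseteq> V \<Longrightarrow> i \<in> S \<Longrightarrow> x S i \<le> x T i"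
    using x by (simp_all add: is_PMAS_def)
  have "match_value E w {u1, u2} + x {u2, u3} u3 \<le> match_value E w {u1, u2, u3}"
  proof -
    have "x {u1, u2} u1 \<le> x {u1, u2, u3} u1" "x {u1, u2} u2 \<le> x {u1, u2, u3} u2"
      "x {u2, u3} u3 \<le> x {u1, u2, u3} u3"
      by (rule mon; use verts in auto)+
    then show ?thesis
      using eff[of "{u1, u2}"] eff[of "{u1, u2, u3}"] verts dist by simp
  qed
  moreover have "match_value E w {u3, u4} + x {u2, u3} u2 \<le> match_value E w {u2, u3, u4}"
  proof -
    have "x {u3, u4} u3 \<le> x {u2, u3, u4} u3" "x {u3, u4} u4 \<le> x {u2, u3, u4} u4"
      "x {u2, u3} u2 \<le> x {u2, u3, u4} u2"
      by (rule mon; use verts in auto)+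
    then show ?thesis
      using eff[of "{u3, u4}"] eff[of "{u2, u3, u4}"] verts dist by simp
  qed
  moreover have "match_value E w {u2, u3} = x {u2, u3} u2 + x {u2, u3} u3"
    using eff[of "{u2, u3}"] verts dist by simp
  ultimately show ?thesis by linarith
qed

lemma add_le_if_le_max_add_max:
  fixes a b c :: real
  assumes "0 < a" "0 < b" "0 < c" "a + b + c \<le> max a b + max b c"
  shows "a + c \<le> b"
  using assms by (auto simp: max_def split: if_splits)

theorem mainTheorem2:
  fixes V :: "'a set" and E :: "'a set set" and w :: "'a set \<Rightarrow> real"
    and v1 v2 v3 v4 :: 'a
  assumes G: "weighted_simple_graph V E w"
    and verts: "v1 \<in> V" "v2 \<in> V" "v3 \<in> V" "v4 \<in> V"
    and dist: "distinct [v1, v2, v3, v4]"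
    and tri1: "induced_edges E {v1, v2, v3} = {{v1, v2}, {v2, v3}}"
    and tri2: "induced_edges E {v2, v3, v4} = {{v2, v3}, {v3, v4}}"
    and pm: "population_monotonic V E w"
  shows "w {v2, v3} \<ge> w {v1, v2} + w {v3, v4}"
proof -
  obtain x where x: "is_PMAS V E w x" using pm population_monotonic_def by blast
  have finE: "finite E" using G by (rule finite_edges_if_weighted_simple_graph)
  have edges: "{v1, v2} \<in> E" "{v2, v3} \<in> E" "{v3, v4} \<in> E"
    using tri1 tri2 by (auto simp: induced_edges_def)
  then have pos: "w {v1, v2} > 0" "w {v2, v3} > 0" "w {v3, v4} > 0"
    using G by (auto simp: weighted_simple_graph_def)
  have "match_value E w {v1, v2, v3} \<le> max (w {v1, v2}) (w {v2, v3})"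
    "match_value E w {v2, v3, v4} \<le> max (w {v2, v3}) (w {v3, v4})"
    using match_value_two_edge_path[OF finE tri1] match_value_two_edge_path[OF finE tri2]
      dist pos by (auto simp: doubleton_eq_iff)
  moreover have "w {v1, v2} \<le> match_value E w {v1, v2}" "w {v2, v3} \<le> match_value E w {v2, v3}"
    "w {v3, v4} \<le> match_value E w {v3, v4}"
    using edges by (auto intro: match_value_ge_edge[OF finE])
  ultimately show ?thesis
    using PMAS_path_inequality[OF x verts dist] add_le_if_le_max_add_max[OF pos(1,2,3)]
    by linarith
qed

end
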